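(* Fix $t\in\mathbb{C}$, $t\neq0$, and four-end tangles $T_1,T_2$. (i) Let $\rho$ be a trace-$t$ representation of $T_1*_vT_2$ with $u(\rho)\notin\{2,t^2-2\}$, and let $\dot u_i=\dot u(\rho|_{T_i})$, $\check u_i=\check u(\rho|_{T_i})$. Then $\dot{\mathbf{g}}=\mathbf{e}$ (where $\dot{\mathbf{g}}=\mathbf{x}^{\mathrm{ne}}\mathbf{x}^{\mathrm{se}}$ for $\rho$ on $T_1*_vT_2$) if and only if $\dot u_1=\dot u_2$ and $\check u_1+\check u_2=0$. (ii) Let $\rho$ be a trace-$t$ representation of $T_1*_hT_2$ with $\dot u(\rho)\notin\{2,t^2-2\}$, and let $u_i=u(\rho|_{T_i})$, $\check u_i=\check u(\rho|_{T_i})$. Then $\mathbf{g}=\mathbf{e}$ (where $\mathbf{g}=\mathbf{x}^{\mathrm{nw}}\mathbf{x}^{\mathrm{ne}}$ for $\rho$ on $T_1*_hT_2$) if and only if $u_1=u_2$ and $\check u_1+\check u_2=0$.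
   Context: $G=\mathrm{SL}(2,\mathbb{C})$, $\mathbf{e}$ the identity, $G(t)=\{\mathbf{x}\in G:\mathrm{tr}\,\mathbf{x}=t\}$. A four-end tangle $T$ is a tangle diagram in a disk (a 1-submanifold of a 3-ball $B$ meeting $\partial B$ in four points) with endpoints at the northwest, northeast, southwest, southeast; the end arcs, directed outward, are $T^{\mathrm{nw}},T^{\mathrm{ne}},T^{\mathrm{sw}},T^{\mathrm{se}}$. A representation of $T$ is a map $\rho$ from directed arcs to $G$ with $\rho(a^{-1})=\rho(a)^{-1}$ satisfying the Wirtinger relation $\rho(c)=\rho(a)\rho(b)\rho(a)^{-1}$ at each crossing (over-arc $a$); equivalently a homomorphism $\pi_1(B\setminus T)\to G$. It is trace-$t$ if every $\rho(a)\in G(t)$. With $\mathbf{x}^{\mathrm{ot}}=\rho(T^{\mathrm{ot}})$: $u=\mathrm{tr}(\mathbf{x}^{\mathrm{nw}}\mathbf{x}^{\mathrm{ne}})$, $\dot u=\mathrm{tr}(\mathbf{x}^{\mathrm{ne}}\mathbf{x}^{\mathrm{se}})$, $\check u=\mathrm{tr}(\mathbf{x}^{\mathrm{nw}}\mathbf{x}^{\mathrm{se}})-\mathrm{tr}(\mathbf{x}^{\mathrm{sw}}\mathbf{x}^{\mathrm{ne}})$. Vertical composition $T_1*_vT_2$: $T_1$ above $T_2$, SW (resp. SE) endpoint of $T_1$ joined to NW (resp. NE) endpoint of $T_2$. Horizontal composition $T_1*_hT_2$: $T_1$ left of $T_2$, NE (resp. SE) endpoint of $T_1$ joined to NW (resp.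 SW) endpoint of $T_2$. $\rho|_{T_i}$ denotes restriction. (Representations with $\dot{\mathbf{g}}=\mathbf{e}$, resp. $\mathbf{g}=\mathbf{e}$, are exactly representations of the denominator closure $D(T)$, joining NW to SW and NE to SE, resp. numerator closure $N(T)$, joining NW to NE and SW to SE.) *)

theory Defs
  imports "HOL-Analysis.Analysis"
begin

type_synonym mat2 = "complex^2^2"

definition SLtr :: "complex \<Rightarrow> mat2 \<Rightarrow> bool" where
  "SLtr t A \<longleftrightarrow> det A = 1 \<and> trace A = t"

text \<open>Four-end tangle diagrams in Morse (level) form, read from bottom to top.
  Each level is a row of strand points numbered 0,1,... from left to right.
  Cross i: the strand from bottom position i goes to top position i+1 OVER the strand
  from bottom position i+1 to top position i.  CrossInv i: the mirror crossing.
  Cup i: a minimum creating two new points at positions i, i+1.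
  Cap i: a maximum joining points i and i+1.\<close>

datatype tstep = Cross nat | CrossInv nat | Cup nat | Cap nat

fun tdiag_width :: "nat \<Rightarrow> tstep list \<Rightarrow> nat option" where
  "tdiag_width n [] = Some n"
| "tdiag_width n (Cross i # T) = (if Suc i < n then tdiag_width n T else None)"
| "tdiag_width n (CrossInv i # T) = (if Suc i < n then tdiag_width n T else None)"
| "tdiag_width n (Cup i # T) = (if i \<le> n then tdiag_width (n + 2) T else None)"
| "tdiag_width n (Cap i # T) = (if Suc i < n then tdiag_width (n - 2) T else None)"

text \<open>A four-end tangle diagram: two ends at the bottom (SW, SE), two at the top (NW, NE).\<close>
definition four_end_tangle :: "tstep list \<Rightarrow> bool" where
  "four_end_tangle T \<longleftrightarrow> tdiag_width 2 T = Some 2"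

text \<open>Labels: each strand point at a level carries the value of rho on the arc through it,
  directed upward.  Wirtinger relations at crossings; the reverse direction gets the inverse
  (at cups and caps the arc turns around).\<close>

fun wstep :: "tstep \<Rightarrow> mat2 list \<Rightarrow> mat2 list \<Rightarrow> bool" where
  "wstep (Cross i) s s' \<longleftrightarrow> Suc i < length s \<and>
      s' = s[i := s!i ** s!(Suc i) ** matrix_inv (s!i), Suc i := s!i]"
| "wstep (CrossInv i) s s' \<longleftrightarrow> Suc i < length s \<and>
      s' = s[i := s!(Suc i), Suc i := matrix_inv (s!(Suc i)) ** s!i ** s!(Suc i)]"
| "wstep (Cup i) s s' \<longleftrightarrow> i \<le> length s \<and>
      (\<exists>x. s' = take i s @ [x, matrix_inv x] @ drop i s)"
| "wstep (Cap i) s s' \<longleftrightarrow> Suc i < length s \<and> s!(Suc i) = matrix_inv (s!i) \<and>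
      s' = take i s @ drop (Suc (Suc i)) s"

text \<open>A trace-t representation of the diagram T: the list of label rows at all levels.\<close>
definition is_trace_rep :: "complex \<Rightarrow> tstep list \<Rightarrow> mat2 list list \<Rightarrow> bool" where
  "is_trace_rep t T ss \<longleftrightarrow> length ss = Suc (length T) \<and> length (ss!0) = 2 \<and>
     (\<forall>k<length T. wstep (T!k) (ss!k) (ss!(Suc k))) \<and>
     (\<forall>s\<in>set ss. \<forall>x\<in>set s. SLtr t x)"

text \<open>Values on the end arcs, directed outward.\<close>
definition x_nw :: "mat2 list list \<Rightarrow> mat2" where "x_nw ss = last ss ! 0"
definition x_ne :: "mat2 list list \<Rightarrow> mat2" where "x_ne ss = last ss ! 1"
definition x_sw :: "mat2 list list \<Rightarrow> mat2" where "x_sw ss = matrix_inv (hd ss ! 0)"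
definition x_se :: "mat2 list list \<Rightarrow> mat2" where "x_se ss = matrix_inv (hd ss ! 1)"

definition u_inv :: "mat2 list list \<Rightarrow> complex" where
  "u_inv ss = trace (x_nw ss ** x_ne ss)"
definition udot_inv :: "mat2 list list \<Rightarrow> complex" where
  "udot_inv ss = trace (x_ne ss ** x_se ss)"
definition ucheck_inv :: "mat2 list list \<Rightarrow> complex" where
  "ucheck_inv ss = trace (x_nw ss ** x_se ss) - trace (x_sw ss ** x_ne ss)"

text \<open>Vertical composition: T1 above T2.\<close>
definition vcomp :: "tstep list \<Rightarrow> tstep list \<Rightarrow> tstep list" where
  "vcomp T1 T2 = T2 @ T1"
definition vres1 :: "tstep list \<Rightarrow> tstep list \<Rightarrow> mat2 list list \<Rightarrow> mat2 list list" where
  "vres1 T1 T2 ss = drop (length T2) ss"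
definition vres2 :: "tstep list \<Rightarrow> tstep list \<Rightarrow> mat2 list list \<Rightarrow> mat2 list list" where
  "vres2 T1 T2 ss = take (Suc (length T2)) ss"

fun shift_step :: "nat \<Rightarrow> tstep \<Rightarrow> tstep" where
  "shift_step k (Cross i) = Cross (i + k)"
| "shift_step k (CrossInv i) = CrossInv (i + k)"
| "shift_step k (Cup i) = Cup (i + k)"
| "shift_step k (Cap i) = Cap (i + k)"

text \<open>Horizontal composition: T1 left of T2; a cup joins SE of T1 to SW of T2, a cap joins
  NE of T1 to NW of T2.\<close>
definition hcomp :: "tstep list \<Rightarrow> tstep list \<Rightarrow> tstep list" where
  "hcomp T1 T2 = [Cup 1] @ T1 @ map (shift_step 2) T2 @ [Cap 1]"
definition hres1 :: "tstep list \<Rightarrow> tstep list \<Rightarrow> mat2 list list \<Rightarrow> mat2 list list" where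
  "hres1 T1 T2 ss = map (\<lambda>s. take (length s - 2) s) (take (Suc (length T1)) (drop 1 ss))"
definition hres2 :: "tstep list \<Rightarrow> tstep list \<Rightarrow> mat2 list list \<Rightarrow> mat2 list list" where
  "hres2 T1 T2 ss = map (drop 2) (take (Suc (length T2)) (drop (Suc (length T1)) ss))"

end

theory Submission
  imports Defs
begin

(* Every representation of a four-end tangle satisfies x_nw x_ne x_se x_sw = e (the loop around
   the boundary of the disk).  In a vertical composition put g = x_nw x_ne of the upper tangle;
   the gluing and the two boundary relations express all eight end values through g and the
   trace-t matrices B = x_ne of T1, Q = x_ne of T2 and C = x_se of T2.  Then g-dot = e means
   C = B^-1, and the two trace conditions say precisely that S = C - B^-1 is orthogonal, for the
   trace form, to e, g, Q and gQ.  These four matrices span M_2(C) unless tr[g,Q] = 2, and here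
   tr[g,Q] - 2 = (tr g - 2)(tr g + 2 - t^2), which is nonzero because u is not 2 or t^2 - 2.
   The horizontal case is the vertical one for both tangles turned by a quarter turn. *)

section \<open>SL(2,C) and the trace form\<close>

definition adjugate2 :: "mat2 \<Rightarrow> mat2" where
  "adjugate2 X = mat (trace X) - X"

lemma mat2_entries:
  "(X ** Y)$1$1 = X$1$1 * Y$1$1 + X$1$2 * Y$2$1" "(X ** Y)$1$2 = X$1$1 * Y$1$2 + X$1$2 * Y$2$2"
  "(X ** Y)$2$1 = X$2$1 * Y$1$1 + X$2$2 * Y$2$1" "(X ** Y)$2$2 = X$2$1 * Y$1$2 + X$2$2 * Y$2$2"
  "(adjugate2 X)$1$1 = X$2$2" "(adjugate2 X)$1$2 = - X$1$2"
  "(adjugate2 X)$2$1 = - X$2$1" "(adjugate2 X)$2$2 = X$1$1"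
  "trace X = X$1$1 + X$2$2" "det X = X$1$1 * X$2$2 - X$1$2 * X$2$1"
  "(X - Y)$i$j = X$i$j - Y$i$j" "(0::mat2)$i$j = 0"
  by (simp_all add: matrix_matrix_mult_def sum_2 trace_def det_2 mat_def adjugate2_def)

lemma mult_adjugate2: "X ** adjugate2 X = mat (det X)" "adjugate2 X ** X = mat (det X)"
  by (simp_all add: vec_eq_iff forall_2 mat2_entries mat_def algebra_simps)

lemma trace_adjugate2: "trace (adjugate2 X) = trace X"
  and det_adjugate2: "det (adjugate2 X) = det X"
  and adjugate2_adjugate2: "adjugate2 (adjugate2 X) = X"
  and adjugate2_mult: "adjugate2 (X ** Y) = adjugate2 Y ** adjugate2 X"
  by (simp_all add: vec_eq_iff forall_2 mat2_entries algebra_simps)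

lemma SL2_left_inverse_unique: "X ** Y = mat 1 \<Longrightarrow> det Y = 1 \<Longrightarrow> X = adjugate2 Y"
  by (metis mult_adjugate2(1) matrix_mul_assoc matrix_mul_lid matrix_mul_rid)

lemma SL2_right_inverse_unique: "Y ** X = mat 1 \<Longrightarrow> det Y = 1 \<Longrightarrow> X = adjugate2 Y"
  by (metis mult_adjugate2(2) matrix_mul_assoc matrix_mul_lid matrix_mul_rid)

lemma matrix_inv_eq_adjugate2:
  assumes "det X = 1"
  shows "matrix_inv X = adjugate2 X"
proof -
  have inv: "X ** matrix_inv X = mat 1 \<and> matrix_inv X ** X = mat 1"
    unfolding matrix_inv_def by (rule someI[of _ "adjugate2 X"]) (simp add: mult_adjugate2 assms)
  then show ?thesis using SL2_left_inverse_unique assms by blast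
qed

lemma SL2_mult_matrix_inv:
  fixes X :: mat2
  assumes "det X = 1"
  shows "X ** matrix_inv X = mat 1" and "matrix_inv X ** X = mat 1"
  by (simp_all add: matrix_inv_eq_adjugate2 mult_adjugate2 assms)

lemma SL2_matrix_inv_matrix_inv:
  fixes X :: mat2
  shows "det X = 1 \<Longrightarrow> matrix_inv (matrix_inv X) = X"
  by (simp add: matrix_inv_eq_adjugate2 det_adjugate2 adjugate2_adjugate2)

lemma SLtr_matrix_inv: "SLtr t X \<Longrightarrow> SLtr t (matrix_inv X)"
  by (simp add: SLtr_def matrix_inv_eq_adjugate2 det_adjugate2 trace_adjugate2)

text \<open>The Gram determinant of the trace form on e, a, b, ab is a multiple of tr[a,b] - 2,
  so these four matrices span M_2(C) when tr[a,b] is not 2.\<close>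

lemma trace_orthogonal_eq_0:
  fixes a b S :: mat2
  assumes "det a = 1" "det b = 1" "trace (a ** b ** matrix_inv a ** matrix_inv b) \<noteq> 2"
    and "trace S = 0" "trace (a ** S) = 0" "trace (b ** S) = 0" "trace (a ** b ** S) = 0"
  shows "S = 0"
proof -
  let ?k = "trace (a ** b ** adjugate2 a ** adjugate2 b) - 2"
  have "?k \<noteq> 0" using assms(1-3) by (simp add: matrix_inv_eq_adjugate2)
  moreover have "?k * S$1$1 = 0" "?k * S$1$2 = 0" "?k * S$2$1 = 0" "?k * S$2$2 = 0"
    using assms(1,2,4-) unfolding mat2_entries by algebra+
  ultimately show ?thesis by (simp add: vec_eq_iff forall_2)
qed

lemma trace_commutator_SL2:
  fixes g Q :: mat2
  assumes "det g = 1" "det Q = 1" "trace Q = t" "trace (g ** adjugate2 Q) = t"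
  shows "trace (g ** Q ** adjugate2 g ** adjugate2 Q) - 2 = (trace g - 2) * (trace g + 2 - t^2)"
  using assms unfolding mat2_entries by algebra

lemma SL2_inverse_from_traces:
  fixes g B Q C :: mat2
  assumes dg: "det g = 1" and dQ: "det Q = 1"
    and tB: "trace B = t" and tC: "trace C = t" and tQ: "trace Q = t"
    and tgB: "trace (g ** adjugate2 B) = t" and tgQ: "trace (g ** adjugate2 Q) = t"
    and tCg: "trace (adjugate2 C ** adjugate2 g) = t"
    and c1: "trace (B ** adjugate2 Q) = trace (Q ** C)"
    and c2: "trace (g ** adjugate2 B ** adjugate2 Q) - trace (Q ** adjugate2 g ** B)
      + trace (g ** adjugate2 Q ** C) - trace (adjugate2 C ** adjugate2 g ** Q) = 0"
    and nondeg: "(trace g - 2) * (trace g + 2 - t^2) \<noteq> 0"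
  shows "C = adjugate2 B"
proof -
  define S where "S = C - adjugate2 B"
  have orth_e: "trace S = 0"
    unfolding S_def using tB tC by (simp add: trace_sub trace_adjugate2)
  have orth_g: "trace (g ** S) = 0"
    using tB[symmetric] tC[symmetric] tgB[symmetric] tCg[symmetric]
    unfolding S_def mat2_entries by algebra
  have orth_Q: "trace (Q ** S) = 0"
    using tB[symmetric] tC[symmetric] tQ[symmetric] c1
    unfolding S_def mat2_entries by algebra
  have orth_gQ: "trace (g ** Q ** S) = 0"
    using orth_g orth_Q tB[symmetric] tC[symmetric] tQ[symmetric] c1 c2
    unfolding S_def mat2_entries by algebra
  have "trace (g ** Q ** adjugate2 g ** adjugate2 Q) - 2 \<noteq> 0"
    using trace_commutator_SL2[OF dg dQ tQ tgQ] nondeg by simp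
  then have "S = 0"
    using trace_orthogonal_eq_0[OF dg dQ _ orth_e orth_g orth_Q orth_gQ]
    by (simp add: matrix_inv_eq_adjugate2 dg dQ)
  then show ?thesis unfolding S_def by simp
qed

lemma SL2_inverse_trace_identities:
  fixes g B Q :: mat2
  shows "trace (B ** adjugate2 Q) = trace (Q ** adjugate2 B)"
    and "trace (g ** adjugate2 B ** adjugate2 Q) - trace (Q ** adjugate2 g ** B)
      + trace (g ** adjugate2 Q ** adjugate2 B) - trace (B ** adjugate2 g ** Q) = 0"
  unfolding mat2_entries by algebra+

section \<open>Gluing criteria for boundary values\<close>

definition four_end_boundary :: "complex \<Rightarrow> mat2 \<Rightarrow> mat2 \<Rightarrow> mat2 \<Rightarrow> mat2 \<Rightarrow> bool" where
  "four_end_boundary t nw ne se sw \<longleftrightarrow>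
     SLtr t nw \<and> SLtr t ne \<and> SLtr t se \<and> SLtr t sw \<and> nw ** ne ** se ** sw = mat 1"

lemma four_end_boundary_rotate:
  assumes "four_end_boundary t nw ne se sw"
  shows "four_end_boundary t sw nw ne se"
proof -
  have "(nw ** ne ** se) ** sw = mat 1" and "det (nw ** ne ** se) = 1"
    using assms by (simp_all add: four_end_boundary_def SLtr_def det_mul)
  then have "sw = adjugate2 (nw ** ne ** se)" by (rule SL2_right_inverse_unique)
  then have "sw ** (nw ** ne ** se) = mat 1"
    using \<open>det (nw ** ne ** se) = 1\<close> by (simp add: mult_adjugate2)
  then have "sw ** nw ** ne ** se = mat 1" by (simp add: matrix_mul_assoc)
  then show ?thesis using assms by (simp add: four_end_boundary_def)
qed

lemma four_end_boundary_trace_sw_nw: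
  assumes "four_end_boundary t nw ne se sw"
  shows "trace (sw ** nw) = trace (ne ** se)"
proof -
  have "(sw ** nw) ** (ne ** se) = mat 1" and "det (ne ** se) = 1"
    using four_end_boundary_rotate[OF assms] assms
    by (simp_all add: four_end_boundary_def SLtr_def det_mul matrix_mul_assoc)
  then have "sw ** nw = adjugate2 (ne ** se)" by (rule SL2_left_inverse_unique)
  then show ?thesis by (simp add: trace_adjugate2)
qed

lemma vertical_gluing_normal_form:
  assumes b1: "four_end_boundary t nw1 ne1 se1 sw1" and b2: "four_end_boundary t nw2 ne2 se2 sw2"
    and west: "sw1 = matrix_inv nw2" and east: "se1 = matrix_inv ne2"
  defines "g \<equiv> nw1 ** ne1"
  shows "det g = 1" and "nw1 = g ** adjugate2 ne1" and "se1 = adjugate2 ne2"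
    and "sw1 = adjugate2 nw2" and "nw2 = g ** adjugate2 ne2" and "sw2 = adjugate2 se2 ** adjugate2 g"
proof -
  have d: "det nw1 = 1" "det ne1 = 1" "det nw2 = 1" "det ne2 = 1" "det se2 = 1"
    and rel1: "nw1 ** ne1 ** se1 ** sw1 = mat 1" and rel2: "nw2 ** ne2 ** se2 ** sw2 = mat 1"
    using b1 b2 unfolding four_end_boundary_def SLtr_def by auto
  show se1: "se1 = adjugate2 ne2" and sw1: "sw1 = adjugate2 nw2"
    using east west d by (simp_all add: matrix_inv_eq_adjugate2)
  show dg: "det g = 1" and "nw1 = g ** adjugate2 ne1"
    unfolding g_def using d by (simp_all add: det_mul matrix_mul_assoc[symmetric] mult_adjugate2)
  have "g ** (adjugate2 ne2 ** adjugate2 nw2) = mat 1"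
    using rel1 unfolding g_def se1 sw1 by (simp add: matrix_mul_assoc)
  then have "g = adjugate2 (adjugate2 ne2 ** adjugate2 nw2)"
    by (rule SL2_left_inverse_unique) (simp add: det_mul det_adjugate2 d)
  then have g: "g = nw2 ** ne2" by (simp add: adjugate2_mult adjugate2_adjugate2)
  then show "nw2 = g ** adjugate2 ne2"
    using d by (simp add: matrix_mul_assoc[symmetric] mult_adjugate2)
  have "(g ** se2) ** sw2 = mat 1"
    using rel2 g by (simp add: matrix_mul_assoc)
  then have "sw2 = adjugate2 (g ** se2)"
    by (rule SL2_right_inverse_unique) (simp add: det_mul dg d)
  then show "sw2 = adjugate2 se2 ** adjugate2 g" by (simp add: adjugate2_mult)
qed

lemma vertical_gluing_criterion:
  assumes b1: "four_end_boundary t nw1 ne1 se1 sw1" and b2: "four_end_boundary t nw2 ne2 se2 sw2"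
    and west: "sw1 = matrix_inv nw2" and east: "se1 = matrix_inv ne2"
    and u: "trace (nw1 ** ne1) \<notin> {2, t^2 - 2}"
  shows "ne1 ** se2 = mat 1 \<longleftrightarrow> trace (ne1 ** se1) = trace (ne2 ** se2) \<and>
    (trace (nw1 ** se1) - trace (sw1 ** ne1)) + (trace (nw2 ** se2) - trace (sw2 ** ne2)) = 0"
proof -
  define g where "g = nw1 ** ne1"
  note nf = vertical_gluing_normal_form[OF b1 b2 west east, folded g_def]
  have d: "det ne1 = 1" "det ne2 = 1"
    and tr: "trace nw1 = t" "trace ne1 = t" "trace nw2 = t" "trace ne2 = t" "trace se2 = t"
      "trace sw2 = t"
    using b1 b2 unfolding four_end_boundary_def SLtr_def by auto
  have nondeg: "(trace g - 2) * (trace g + 2 - t^2) \<noteq> 0"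
    using u unfolding g_def by (auto simp: eq_diff_eq)
  have tg: "trace (g ** adjugate2 ne1) = t" "trace (g ** adjugate2 ne2) = t"
    "trace (adjugate2 se2 ** adjugate2 g) = t"
    using tr(1,3,6) unfolding nf(2,5,6) .
  have "ne1 ** se2 = mat 1 \<longleftrightarrow> se2 = adjugate2 ne1"
    using SL2_right_inverse_unique d by (auto simp: mult_adjugate2)
  also have "\<dots> \<longleftrightarrow> trace (ne1 ** adjugate2 ne2) = trace (ne2 ** se2) \<and>
    trace (g ** adjugate2 ne1 ** adjugate2 ne2) - trace (ne2 ** adjugate2 g ** ne1)
      + trace (g ** adjugate2 ne2 ** se2) - trace (adjugate2 se2 ** adjugate2 g ** ne2) = 0"
    using SL2_inverse_from_traces[OF nf(1) d(2) tr(2,5,4) tg _ _ nondeg]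
      SL2_inverse_trace_identities by (auto simp: adjugate2_adjugate2)
  also have "\<dots> \<longleftrightarrow> trace (ne1 ** se1) = trace (ne2 ** se2) \<and>
    (trace (nw1 ** se1) - trace (sw1 ** ne1)) + (trace (nw2 ** se2) - trace (sw2 ** ne2)) = 0"
    unfolding nf(2-6) by (simp add: adjugate2_mult adjugate2_adjugate2 algebra_simps)
  finally show ?thesis .
qed

lemma horizontal_gluing_criterion:
  assumes b1: "four_end_boundary t nw1 ne1 se1 sw1" and b2: "four_end_boundary t nw2 ne2 se2 sw2"
    and north: "nw2 = matrix_inv ne1" and south: "sw2 = matrix_inv se1"
    and u: "trace (ne2 ** se2) \<notin> {2, t^2 - 2}"
  shows "nw1 ** ne2 = mat 1 \<longleftrightarrow> trace (nw1 ** ne1) = trace (nw2 ** ne2) \<and>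
    (trace (nw1 ** se1) - trace (sw1 ** ne1)) + (trace (nw2 ** se2) - trace (sw2 ** ne2)) = 0"
proof -
  have "det ne1 = 1" "det se1 = 1"
    using b1 by (simp_all add: four_end_boundary_def SLtr_def)
  then have ne1: "ne1 = matrix_inv nw2" and se1: "se1 = matrix_inv sw2"
    using north south by (simp_all add: SL2_matrix_inv_matrix_inv)
  have "trace (sw1 ** nw1) = trace (adjugate2 (sw2 ** nw2))"
    using four_end_boundary_trace_sw_nw[OF b1] \<open>det ne1 = 1\<close> \<open>det se1 = 1\<close> north south
    by (simp add: matrix_inv_eq_adjugate2 adjugate2_mult det_adjugate2 adjugate2_adjugate2)
  also have "\<dots> = trace (ne2 ** se2)"
    using four_end_boundary_trace_sw_nw[OF b2] by (simp add: trace_adjugate2)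
  finally have "trace (sw1 ** nw1) \<notin> {2, t^2 - 2}" using u by simp
  from vertical_gluing_criterion[OF four_end_boundary_rotate[OF b1] four_end_boundary_rotate[OF b2]
      se1 ne1 this]
  show ?thesis
    using trace_mul_sym[of se1 nw1] trace_mul_sym[of se2 nw2] by (auto simp: algebra_simps)
qed

section \<open>Representations of composite tangles\<close>

definition row_prod :: "mat2 list \<Rightarrow> mat2" where
  "row_prod s = foldr (**) s (mat 1)"

lemma row_prod_Nil [simp]: "row_prod [] = mat 1"
  and row_prod_Cons [simp]: "row_prod (x # s) = x ** row_prod s"
  by (simp_all add: row_prod_def)

lemma row_prod_append [simp]: "row_prod (s @ s') = row_prod s ** row_prod s'"
  by (induction s) (simp_all add: matrix_mul_assoc)

lemma list_update_pair:
  "Suc i < length s \<Longrightarrow> s[i := a, Suc i := b] = take i s @ [a, b] @ drop (Suc (Suc i)) s"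
  by (simp add: list_update_append upd_conv_take_nth_drop)

lemma row_prod_replace_pair:
  assumes "Suc i < length s" and "a ** b = s!i ** s!Suc i"
  shows "row_prod (take i s @ [a, b] @ drop (Suc (Suc i)) s) = row_prod s"
proof -
  have ab: "a ** (b ** Z) = s!i ** (s!Suc i ** Z)" for Z :: mat2
    using assms(2) by (metis matrix_mul_assoc)
  have "row_prod s = row_prod (take i s @ [s!i, s!Suc i] @ drop (Suc (Suc i)) s)"
    using assms(1) by (simp add: Cons_nth_drop_Suc)
  then show ?thesis by (simp add: ab)
qed

lemma wstep_row_prod:
  assumes step: "wstep st s s'" and det: "\<forall>x\<in>set (s @ s'). det x = 1"
  shows "row_prod s' = row_prod s"
proof (cases st)
  case (Cross i)
  then have i: "Suc i < length s" using step by simp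
  have "s!i ** s!Suc i ** matrix_inv (s!i) ** s!i = s!i ** s!Suc i"
    using det i by (simp add: matrix_mul_assoc[symmetric] SL2_mult_matrix_inv)
  moreover have "s' = take i s @ [s!i ** s!Suc i ** matrix_inv (s!i), s!i] @ drop (Suc (Suc i)) s"
    using step Cross i by (simp only: wstep.simps list_update_pair)
  ultimately show ?thesis using row_prod_replace_pair[OF i] by simp
next
  case (CrossInv i)
  then have i: "Suc i < length s" using step by simp
  have "s!Suc i ** (matrix_inv (s!Suc i) ** s!i ** s!Suc i) = s!i ** s!Suc i"
    using det i by (simp add: matrix_mul_assoc SL2_mult_matrix_inv)
  moreover have "s' = take i s @ [s!Suc i, matrix_inv (s!Suc i) ** s!i ** s!Suc i] @ drop (Suc (Suc i)) s"
    using step CrossInv i by (simp only: wstep.simps list_update_pair)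
  ultimately show ?thesis using row_prod_replace_pair[OF i] by simp
next
  case (Cup i)
  then obtain x where s': "s' = take i s @ [x, matrix_inv x] @ drop i s"
    using step by auto
  then have "x ** matrix_inv x = mat 1" using det by (simp add: SL2_mult_matrix_inv)
  then have "row_prod s' = row_prod (take i s) ** row_prod (drop i s)"
    unfolding s' by (simp add: matrix_mul_assoc)
  then show ?thesis by (metis row_prod_append append_take_drop_id)
next
  case (Cap i)
  then have i: "Suc i < length s" and s': "s' = take i s @ drop (Suc (Suc i)) s"
    and inv: "s!Suc i = matrix_inv (s!i)" using step by auto
  have "row_prod s = row_prod (take i s @ [mat 1, mat 1] @ drop (Suc (Suc i)) s)"
    using row_prod_replace_pair[OF i, of "mat 1" "mat 1"] det i inv
    by (simp add: SL2_mult_matrix_inv)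
  then show ?thesis unfolding s' by simp
qed

lemma wstep_width: "wstep st s s' \<Longrightarrow> tdiag_width (length s) [st] = Some (length s')"
  by (cases st) auto

lemma tdiag_width_Cons:
  "tdiag_width n [st] = Some m \<Longrightarrow> tdiag_width n (st # T) = tdiag_width m T"
  by (cases st) (auto split: if_splits)

lemma tdiag_width_ConsD: "tdiag_width n (st # T) \<noteq> None \<Longrightarrow> tdiag_width n [st] \<noteq> None"
  by (cases st) (auto split: if_splits)

lemma wstep_shift:
  assumes step: "wstep (shift_step (length l) st) (l @ s @ r) s2"
    and fits: "tdiag_width (length s) [st] \<noteq> None"
  shows "\<exists>s'. s2 = l @ s' @ r \<and> wstep st s s'"
proof (cases st)
  case (Cross i)
  then have i: "Suc i < length s" using fits by (simp split: if_splits)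
  then show ?thesis using step Cross by (simp add: nth_append list_update_append)
next
  case (CrossInv i)
  then have i: "Suc i < length s" using fits by (simp split: if_splits)
  then show ?thesis using step CrossInv by (simp add: nth_append list_update_append)
next
  case (Cup i)
  then have i: "i \<le> length s" using fits by (simp split: if_splits)
  then show ?thesis using step Cup by auto
next
  case (Cap i)
  then have i: "Suc i < length s" using fits by (simp split: if_splits)
  then show ?thesis using step Cap by (auto simp: nth_append)
qed

definition wirtinger_chain :: "tstep list \<Rightarrow> mat2 list list \<Rightarrow> bool" where
  "wirtinger_chain T ss \<longleftrightarrow>
     length ss = Suc (length T) \<and> (\<forall>k<length T. wstep (T!k) (ss!k) (ss!Suc k))"

lemma is_trace_rep_iff_wirtinger_chain:
  "is_trace_rep t T ss \<longleftrightarrow>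
     wirtinger_chain T ss \<and> length (hd ss) = 2 \<and> (\<forall>s\<in>set ss. \<forall>x\<in>set s. SLtr t x)"
  unfolding is_trace_rep_def wirtinger_chain_def by (cases ss) auto

lemma wirtinger_chain_Nil: "wirtinger_chain [] ss \<longleftrightarrow> (\<exists>s. ss = [s])"
  unfolding wirtinger_chain_def by (auto simp: length_Suc_conv)

lemma wirtinger_chain_Cons:
  "wirtinger_chain (st # T) ss \<longleftrightarrow>
     (\<exists>s ss'. ss = s # ss' \<and> wstep st s (hd ss') \<and> wirtinger_chain T ss')"
proof (cases ss)
  case (Cons s ss')
  have "length ss' = Suc (length T) \<Longrightarrow> hd ss' = ss'!0" by (cases ss') auto
  then show ?thesis unfolding Cons wirtinger_chain_def by (auto simp: All_less_Suc2)
qed (simp add: wirtinger_chain_def)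

lemma wirtinger_chain_single: "wirtinger_chain [st] ss \<longleftrightarrow> (\<exists>s s'. ss = [s, s'] \<and> wstep st s s')"
  by (auto simp: wirtinger_chain_Cons wirtinger_chain_Nil)

lemma wirtinger_chain_append:
  assumes "wirtinger_chain (T2 @ T1) ss"
  shows "wirtinger_chain T2 (take (Suc (length T2)) ss)"
    and "wirtinger_chain T1 (drop (length T2) ss)"
proof -
  have len: "length ss = Suc (length T2 + length T1)"
    and step: "\<And>k. k < length T2 + length T1 \<Longrightarrow> wstep ((T2 @ T1)!k) (ss!k) (ss!Suc k)"
    using assms unfolding wirtinger_chain_def by auto
  have "wstep (T2!k) (ss!k) (ss!Suc k)" if "k < length T2" for k
    using step[of k] that by (simp add: nth_append)
  then show "wirtinger_chain T2 (take (Suc (length T2)) ss)"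
    unfolding wirtinger_chain_def using len by simp
  show "wirtinger_chain T1 (drop (length T2) ss)"
    unfolding wirtinger_chain_def using len step[of "length T2 + _"] by (simp add: nth_append)
qed

lemma wirtinger_chain_width:
  "wirtinger_chain T ss \<Longrightarrow> tdiag_width (length (hd ss)) T = Some (length (last ss))"
proof (induction T arbitrary: ss)
  case Nil
  then show ?case by (auto simp: wirtinger_chain_Nil)
next
  case (Cons st T)
  then obtain s ss' where "ss = s # ss'" "wstep st s (hd ss')" "wirtinger_chain T ss'"
    by (auto simp: wirtinger_chain_Cons)
  moreover have "ss' \<noteq> []" using \<open>wirtinger_chain T ss'\<close> by (auto simp: wirtinger_chain_def)
  ultimately show ?case using Cons.IH tdiag_width_Cons[OF wstep_width] by simp
qed

lemma wirtinger_chain_row_prod: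
  "wirtinger_chain T ss \<Longrightarrow> \<forall>s\<in>set ss. \<forall>x\<in>set s. det x = 1 \<Longrightarrow>
     row_prod (last ss) = row_prod (hd ss)"
proof (induction T arbitrary: ss)
  case Nil
  then show ?case by (auto simp: wirtinger_chain_Nil)
next
  case (Cons st T)
  then obtain s ss' where "ss = s # ss'" "wstep st s (hd ss')" "wirtinger_chain T ss'"
    by (auto simp: wirtinger_chain_Cons)
  moreover have "ss' \<noteq> []" using \<open>wirtinger_chain T ss'\<close> by (auto simp: wirtinger_chain_def)
  moreover have "\<forall>x\<in>set (hd ss'). det x = 1"
    using Cons.prems(2) \<open>ss = s # ss'\<close> hd_in_set[OF \<open>ss' \<noteq> []\<close>] by simp
  ultimately have "row_prod (hd ss') = row_prod s"
    using Cons.prems(2) wstep_row_prod[of st s "hd ss'"] by auto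
  then show ?case using Cons.IH[OF \<open>wirtinger_chain T ss'\<close>] Cons.prems(2) \<open>ss = s # ss'\<close> \<open>ss' \<noteq> []\<close>
    by simp
qed

lemma wirtinger_chain_shift:
  "wirtinger_chain (map (shift_step (length l)) T) ss \<Longrightarrow> hd ss = l @ s @ r \<Longrightarrow>
     tdiag_width (length s) T \<noteq> None \<Longrightarrow>
     \<exists>ss'. wirtinger_chain T ss' \<and> hd ss' = s \<and> ss = map (\<lambda>s'. l @ s' @ r) ss'"
proof (induction T arbitrary: ss s)
  case Nil
  then show ?case by (auto simp: wirtinger_chain_Nil)
next
  case (Cons st T)
  obtain ss1 where ss: "ss = (l @ s @ r) # ss1"
    and step: "wstep (shift_step (length l) st) (l @ s @ r) (hd ss1)"
    and chain: "wirtinger_chain (map (shift_step (length l)) T) ss1"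
    using Cons.prems(1,2) by (auto simp: wirtinger_chain_Cons)
  obtain s1 where s1: "hd ss1 = l @ s1 @ r" "wstep st s s1"
    using wstep_shift[OF step tdiag_width_ConsD[OF Cons.prems(3)]] by auto
  have "tdiag_width (length s1) T \<noteq> None"
    using Cons.prems(3) tdiag_width_Cons[OF wstep_width[OF s1(2)]] by simp
  then obtain ss1' where "wirtinger_chain T ss1'" "hd ss1' = s1" "ss1 = map (\<lambda>s'. l @ s' @ r) ss1'"
    using Cons.IH[OF chain s1(1)] by auto
  then show ?case
    using ss s1(2) by (intro exI[of _ "s # ss1'"]) (auto simp: wirtinger_chain_Cons)
qed

lemma trace_rep_boundary:
  assumes T: "four_end_tangle T" and rep: "is_trace_rep t T ss"
  shows "four_end_boundary t (x_nw ss) (x_ne ss) (x_se ss) (x_sw ss)"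
proof -
  have chain: "wirtinger_chain T ss" and len: "length (hd ss) = 2"
    and SL: "\<forall>s\<in>set ss. \<forall>x\<in>set s. SLtr t x"
    using rep by (simp_all add: is_trace_rep_iff_wirtinger_chain)
  have "ss \<noteq> []" using chain by (auto simp: wirtinger_chain_def)
  then have SL_ends: "\<forall>x\<in>set (hd ss) \<union> set (last ss). SLtr t x" using SL by auto
  have "length (last ss) = 2"
    using wirtinger_chain_width[OF chain] T len by (simp add: four_end_tangle_def)
  then obtain a b c d where ab: "hd ss = [a, b]" and cd: "last ss = [c, d]"
    using len by (auto simp: length_Suc_conv numeral_2_eq_2)
  have "c ** d = a ** b"
    using wirtinger_chain_row_prod[OF chain] SL ab cd by (auto simp: SLtr_def)
  then have "c ** d ** matrix_inv b ** matrix_inv a = mat 1"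
    using SL_ends ab by (simp add: SLtr_def matrix_mul_assoc[symmetric] SL2_mult_matrix_inv)
  then show ?thesis
    using SL_ends ab cd
    by (simp add: four_end_boundary_def x_nw_def x_ne_def x_se_def x_sw_def SLtr_matrix_inv)
qed

lemma vcomp_restrictions:
  assumes T1: "four_end_tangle T1" and T2: "four_end_tangle T2"
    and rep: "is_trace_rep t (vcomp T1 T2) ss"
  shows "is_trace_rep t T1 (vres1 T1 T2 ss)" and "is_trace_rep t T2 (vres2 T1 T2 ss)"
    and "x_sw (vres1 T1 T2 ss) = matrix_inv (x_nw (vres2 T1 T2 ss))"
    and "x_se (vres1 T1 T2 ss) = matrix_inv (x_ne (vres2 T1 T2 ss))"
    and "x_nw ss = x_nw (vres1 T1 T2 ss)" and "x_ne ss = x_ne (vres1 T1 T2 ss)"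
    and "x_se ss = x_se (vres2 T1 T2 ss)"
proof -
  have chain: "wirtinger_chain (T2 @ T1) ss" and len: "length (hd ss) = 2"
    and SL: "\<forall>s\<in>set ss. \<forall>x\<in>set s. SLtr t x"
    using rep by (simp_all add: is_trace_rep_iff_wirtinger_chain vcomp_def)
  have n: "length ss = Suc (length T2 + length T1)"
    using chain by (simp add: wirtinger_chain_def)
  have hd2: "hd (vres2 T1 T2 ss) = hd ss" and last1: "last (vres1 T1 T2 ss) = last ss"
    using n by (simp_all add: vres1_def vres2_def hd_conv_nth)
  have middle: "hd (vres1 T1 T2 ss) = last (vres2 T1 T2 ss)"
    using n by (simp add: vres1_def vres2_def hd_drop_conv_nth take_Suc_conv_app_nth)
  then show "x_sw (vres1 T1 T2 ss) = matrix_inv (x_nw (vres2 T1 T2 ss))"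
    "x_se (vres1 T1 T2 ss) = matrix_inv (x_ne (vres2 T1 T2 ss))"
    "x_nw ss = x_nw (vres1 T1 T2 ss)" "x_ne ss = x_ne (vres1 T1 T2 ss)"
    "x_se ss = x_se (vres2 T1 T2 ss)"
    using hd2 last1 by (simp_all add: x_nw_def x_ne_def x_sw_def x_se_def)
  have chain2: "wirtinger_chain T2 (vres2 T1 T2 ss)"
    using wirtinger_chain_append(1)[OF chain] by (simp add: vres2_def)
  then show "is_trace_rep t T2 (vres2 T1 T2 ss)"
    using len SL hd2 by (auto simp: is_trace_rep_iff_wirtinger_chain vres2_def dest: in_set_takeD)
  have "length (hd (vres1 T1 T2 ss)) = 2"
    using wirtinger_chain_width[OF chain2] T2 len hd2 middle by (simp add: four_end_tangle_def)
  then show "is_trace_rep t T1 (vres1 T1 T2 ss)"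
    using wirtinger_chain_append(2)[OF chain] SL
    by (auto simp: is_trace_rep_iff_wirtinger_chain vres1_def dest: in_set_dropD)
qed

lemma shift_step_0 [simp]: "shift_step 0 = id"
proof
  show "shift_step 0 st = id st" for st by (cases st) simp_all
qed

lemma wirtinger_chain_juxtapose:
  assumes chain: "wirtinger_chain (T1 @ map (shift_step (length s1)) T2) ss"
    and hd: "hd ss = s1 @ s2"
    and w1: "tdiag_width (length s1) T1 = Some (length s1)" and w2: "tdiag_width (length s2) T2 \<noteq> None"
  shows "\<exists>ss1 ss2. wirtinger_chain T1 ss1 \<and> wirtinger_chain T2 ss2 \<and> hd ss1 = s1 \<and> hd ss2 = s2 \<and>
    take (Suc (length T1)) ss = map (\<lambda>s. s @ s2) ss1 \<and> drop (length T1) ss = map (\<lambda>s. last ss1 @ s) ss2"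
proof -
  have n: "length ss = Suc (length T1 + length T2)"
    using chain by (simp add: wirtinger_chain_def)
  have chain1: "wirtinger_chain (map (shift_step (length ([] :: mat2 list))) T1) (take (Suc (length T1)) ss)"
    using wirtinger_chain_append(1)[OF chain] by simp
  have hd1: "hd (take (Suc (length T1)) ss) = [] @ s1 @ s2"
    using hd n by (cases ss) auto
  obtain ss1 where ss1: "wirtinger_chain T1 ss1" "hd ss1 = s1"
      "take (Suc (length T1)) ss = map (\<lambda>s. s @ s2) ss1"
    using wirtinger_chain_shift[OF chain1 hd1] w1 by auto
  have "ss1 \<noteq> []" using ss1(1) by (auto simp: wirtinger_chain_def)
  have "length (last ss1) = length s1"
    using wirtinger_chain_width[OF ss1(1)] ss1(2) w1 by simp
  moreover have "hd (drop (length T1) ss) = last ss1 @ s2"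
    using arg_cong[OF ss1(3), of last] n \<open>ss1 \<noteq> []\<close>
    by (simp add: hd_drop_conv_nth take_Suc_conv_app_nth last_map)
  ultimately obtain ss2 where "wirtinger_chain T2 ss2" "hd ss2 = s2"
      "drop (length T1) ss = map (\<lambda>s. last ss1 @ s) ss2"
    using wirtinger_chain_shift[of "last ss1" T2 "drop (length T1) ss" s2 "[]"]
      wirtinger_chain_append(2)[OF chain] w2
    by auto
  then show ?thesis using ss1 by blast
qed

lemma hcomp_chain_frame:
  assumes chain: "wirtinger_chain (hcomp T1 T2) ss" and len: "length (hd ss) = 2"
  obtains a b x ss' where "ss = [a, b] # ss'" and "length ss' = Suc (Suc (length T1 + length T2))"
    and "hd ss' = [a, x] @ [matrix_inv x, b]"
    and "wirtinger_chain (T1 @ map (shift_step (length [a, x])) T2)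
      (take (Suc (length T1 + length T2)) ss')"
    and "wstep (Cap 1) (ss' ! (length T1 + length T2)) (last ss)"
proof -
  define n where "n = length T1 + length T2"
  obtain a b ss' where ss: "ss = [a, b] # ss'" and cup: "wstep (Cup 1) [a, b] (hd ss')"
    and chain': "wirtinger_chain ((T1 @ map (shift_step 2) T2) @ [Cap 1]) ss'"
    using chain len by (auto simp: hcomp_def wirtinger_chain_Cons length_Suc_conv numeral_2_eq_2)
  have len': "length ss' = Suc (Suc n)"
    using chain' by (simp add: wirtinger_chain_def n_def)
  obtain x where hd': "hd ss' = [a, x] @ [matrix_inv x, b]"
    using cup by auto
  have mid: "wirtinger_chain (T1 @ map (shift_step (length [a, x])) T2) (take (Suc n) ss')"
    using wirtinger_chain_append(1)[OF chain'] by (simp add: n_def numeral_2_eq_2)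
  obtain r0 r1 where cap: "drop n ss' = [r0, r1]" "wstep (Cap 1) r0 r1"
    using wirtinger_chain_append(2)[OF chain'] by (auto simp: n_def wirtinger_chain_single)
  have "hd (drop n ss') = ss' ! n" and "last (drop n ss') = last ss"
    using len' ss by (auto simp: hd_drop_conv_nth)
  then have cap_step: "wstep (Cap 1) (ss' ! n) (last ss)"
    using cap by simp
  show thesis by (rule that[folded n_def, OF ss len' hd' mid cap_step])
qed

text \<open>In hcomp, x is the value on the arc created by the cup (joining SE of T1 to SW of T2) and
  y the value on the arc closed by the cap (joining NE of T1 to NW of T2).\<close>

lemma hcomp_restriction_rows:
  assumes T1: "four_end_tangle T1" and T2: "four_end_tangle T2"
    and chain: "wirtinger_chain (hcomp T1 T2) ss" and len: "length (hd ss) = 2"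
  obtains a b x c y d where "hd ss = [a, b]" and "last ss = [c, d]"
    and "wirtinger_chain T1 (hres1 T1 T2 ss)" "hd (hres1 T1 T2 ss) = [a, x]"
      "last (hres1 T1 T2 ss) = [c, y]"
    and "wirtinger_chain T2 (hres2 T1 T2 ss)" "hd (hres2 T1 T2 ss) = [matrix_inv x, b]"
      "last (hres2 T1 T2 ss) = [matrix_inv y, d]"
proof -
  define n1 n2 where "n1 = length T1" and "n2 = length T2"
  have w1: "tdiag_width 2 T1 = Some 2" and w2: "tdiag_width 2 T2 = Some 2"
    using T1 T2 by (simp_all add: four_end_tangle_def)
  obtain a b x ss' where ss: "ss = [a, b] # ss'" and len': "length ss' = Suc (Suc (n1 + n2))"
    and "hd ss' = [a, x] @ [matrix_inv x, b]"
    and mid: "wirtinger_chain (T1 @ map (shift_step (length [a, x])) T2) (take (Suc (n1 + n2)) ss')"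
    and cap: "wstep (Cap 1) (ss' ! (n1 + n2)) (last ss)"
    by (rule hcomp_chain_frame[OF chain len, folded n1_def n2_def])
  then have hd_mid: "hd (take (Suc (n1 + n2)) ss') = [a, x] @ [matrix_inv x, b]"
    by (cases ss') auto
  obtain ss1 ss2 where chains: "wirtinger_chain T1 ss1" "wirtinger_chain T2 ss2"
    and hds: "hd ss1 = [a, x]" "hd ss2 = [matrix_inv x, b]"
    and rows1: "take (Suc n1) (take (Suc (n1 + n2)) ss') = map (\<lambda>s. s @ [matrix_inv x, b]) ss1"
    and rows2: "drop n1 (take (Suc (n1 + n2)) ss') = map (\<lambda>s. last ss1 @ s) ss2"
    using wirtinger_chain_juxtapose[OF mid hd_mid] w1 w2 by (auto simp: numeral_2_eq_2 n1_def)
  have "length (last ss1) = 2" "length (last ss2) = 2"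
    using wirtinger_chain_width[OF chains(1)] wirtinger_chain_width[OF chains(2)] hds w1 w2
    by (simp_all add: numeral_2_eq_2)
  then obtain c y y' d where cy: "last ss1 = [c, y]" and yd: "last ss2 = [y', d]"
    by (auto simp: length_Suc_conv numeral_2_eq_2)
  have "ss2 \<noteq> []" using chains(2) by (auto simp: wirtinger_chain_def)
  have "ss' ! (n1 + n2) = last (drop n1 (take (Suc (n1 + n2)) ss'))"
    using len' by (simp add: take_Suc_conv_app_nth)
  also have "\<dots> = [c, y, y', d]"
    using rows2 cy yd \<open>ss2 \<noteq> []\<close> by (simp add: last_map)
  finally have "y' = matrix_inv y" and "last ss = [c, d]" using cap by auto
  moreover have "hres1 T1 T2 ss = ss1"
    using rows1 len' by (simp add: hres1_def ss n1_def min_def comp_def)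
  moreover have "hres2 T1 T2 ss = ss2"
    using rows2 cy by (simp add: hres2_def ss n1_def n2_def take_drop comp_def add.commute)
  ultimately show thesis
    using that[of a b c d x y] ss chains hds cy yd by simp
qed

lemma hcomp_restrictions:
  assumes T1: "four_end_tangle T1" and T2: "four_end_tangle T2"
    and rep: "is_trace_rep t (hcomp T1 T2) ss"
  shows "is_trace_rep t T1 (hres1 T1 T2 ss)" and "is_trace_rep t T2 (hres2 T1 T2 ss)"
    and "x_nw (hres2 T1 T2 ss) = matrix_inv (x_ne (hres1 T1 T2 ss))"
    and "x_sw (hres2 T1 T2 ss) = matrix_inv (x_se (hres1 T1 T2 ss))"
    and "x_nw ss = x_nw (hres1 T1 T2 ss)" and "x_ne ss = x_ne (hres2 T1 T2 ss)"
    and "x_se ss = x_se (hres2 T1 T2 ss)"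
proof -
  have chain: "wirtinger_chain (hcomp T1 T2) ss" and len: "length (hd ss) = 2"
    and SL: "\<forall>s\<in>set ss. \<forall>x\<in>set s. SLtr t x"
    using rep by (simp_all add: is_trace_rep_iff_wirtinger_chain)
  obtain a b x c y d where rows: "hd ss = [a, b]" "last ss = [c, d]"
    and chain1: "wirtinger_chain T1 (hres1 T1 T2 ss)" "hd (hres1 T1 T2 ss) = [a, x]"
      "last (hres1 T1 T2 ss) = [c, y]"
    and chain2: "wirtinger_chain T2 (hres2 T1 T2 ss)" "hd (hres2 T1 T2 ss) = [matrix_inv x, b]"
      "last (hres2 T1 T2 ss) = [matrix_inv y, d]"
    by (rule hcomp_restriction_rows[OF T1 T2 chain len])
  have "\<forall>s\<in>set (hres1 T1 T2 ss). \<forall>x\<in>set s. SLtr t x" "\<forall>s\<in>set (hres2 T1 T2 ss). \<forall>x\<in>set s. SLtr t x"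
    using SL by (auto simp: hres1_def hres2_def dest!: in_set_takeD in_set_dropD)
  then show "is_trace_rep t T1 (hres1 T1 T2 ss)" "is_trace_rep t T2 (hres2 T1 T2 ss)"
    using chain1 chain2 by (simp_all add: is_trace_rep_iff_wirtinger_chain)
  show "x_nw (hres2 T1 T2 ss) = matrix_inv (x_ne (hres1 T1 T2 ss))"
    "x_sw (hres2 T1 T2 ss) = matrix_inv (x_se (hres1 T1 T2 ss))"
    "x_nw ss = x_nw (hres1 T1 T2 ss)" "x_ne ss = x_ne (hres2 T1 T2 ss)"
    "x_se ss = x_se (hres2 T1 T2 ss)"
    using rows chain1 chain2 by (simp_all add: x_nw_def x_ne_def x_sw_def x_se_def)
qed

theorem mainTheorem5:
  fixes t :: complex and T1 T2 :: "tstep list"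
  assumes "t \<noteq> 0" and "four_end_tangle T1" and "four_end_tangle T2"
  shows "(\<forall>ss. is_trace_rep t (vcomp T1 T2) ss \<and> u_inv ss \<notin> {2, t^2 - 2} \<longrightarrow>
            (x_ne ss ** x_se ss = mat 1 \<longleftrightarrow>
              udot_inv (vres1 T1 T2 ss) = udot_inv (vres2 T1 T2 ss) \<and>
              ucheck_inv (vres1 T1 T2 ss) + ucheck_inv (vres2 T1 T2 ss) = 0))
       \<and> (\<forall>ss. is_trace_rep t (hcomp T1 T2) ss \<and> udot_inv ss \<notin> {2, t^2 - 2} \<longrightarrow>
            (x_nw ss ** x_ne ss = mat 1 \<longleftrightarrow>
              u_inv (hres1 T1 T2 ss) = u_inv (hres2 T1 T2 ss) \<and>
              ucheck_inv (hres1 T1 T2 ss) + ucheck_inv (hres2 T1 T2 ss) = 0))"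
proof (intro conjI allI impI; elim conjE)
  fix ss
  assume rep: "is_trace_rep t (vcomp T1 T2) ss" and u: "u_inv ss \<notin> {2, t^2 - 2}"
  note V = vcomp_restrictions[OF assms(2,3) rep]
  show "x_ne ss ** x_se ss = mat 1 \<longleftrightarrow>
      udot_inv (vres1 T1 T2 ss) = udot_inv (vres2 T1 T2 ss) \<and>
      ucheck_inv (vres1 T1 T2 ss) + ucheck_inv (vres2 T1 T2 ss) = 0"
    unfolding udot_inv_def ucheck_inv_def V(6,7)
    using vertical_gluing_criterion[OF trace_rep_boundary[OF assms(2) V(1)]
        trace_rep_boundary[OF assms(3) V(2)] V(3,4)] u
    by (simp add: u_inv_def V(5,6))
next
  fix ss
  assume rep: "is_trace_rep t (hcomp T1 T2) ss" and u: "udot_inv ss \<notin> {2, t^2 - 2}"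
  note H = hcomp_restrictions[OF assms(2,3) rep]
  show "x_nw ss ** x_ne ss = mat 1 \<longleftrightarrow>
      u_inv (hres1 T1 T2 ss) = u_inv (hres2 T1 T2 ss) \<and>
      ucheck_inv (hres1 T1 T2 ss) + ucheck_inv (hres2 T1 T2 ss) = 0"
    unfolding u_inv_def ucheck_inv_def H(5,6)
    using horizontal_gluing_criterion[OF trace_rep_boundary[OF assms(2) H(1)]
        trace_rep_boundary[OF assms(3) H(2)] H(3,4)] u
    by (simp add: udot_inv_def H(6,7))
qed

end
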